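(* Let $\lambda>0$, let $\boldsymbol\alpha^\star$ be the optimal solution of the dual problem $\max_{\boldsymbol\alpha\ge\mathbf0}D_\lambda(\boldsymbol\alpha)$ and $\mathbf m^\star$ the optimal solution of the primal problem $\min_{\mathbf m\ge\mathbf0}P_\lambda(\mathbf m)$. Suppose $\mathbf q\in\mathbb R^{2nK}_{\ge0}$ and $r\ge0$ satisfy $\|\boldsymbol\alpha^\star-\mathbf q\|_2^2\le r^2$. For $k\in[p]$ let $$\mathrm{Prune}(k\mid\mathbf q,r)=\sum_{i\in[n]}\sum_{l\in\mathcal D_i}q_{il}\max\{x_{i,k},x_{l,k}\}^2+r\sqrt{\sum_{i\in[n]}\Big[\sum_{l\in\mathcal D_i}\max\{x_{i,k},x_{l,k}\}^4+\sum_{j\in\mathcal S_i}\max\{x_{i,k},x_{j,k}\}^4\Big]}.$$ If $\mathrm{Prune}(k\mid\mathbf q,r)\le\lambda$, then $m^\star_{k'}=0$ for every descendant $k'\supseteq k$.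
   Context: Let $n,K,p\ge1$ be integers, $[n]=\{1,\dots,n\}$. For each $i\in[n]$ let $\mathbf x_i=(x_{i,1},\dots,x_{i,p})^\top\in\mathbb R^p$ have nonnegative entries and let $\mathcal D_i,\mathcal S_i\subseteq[n]$ be sets of size $K$. Put $\mathbf c_{ij}=(\mathbf x_i-\mathbf x_j)\circ(\mathbf x_i-\mathbf x_j)$ (entrywise product). Vectors in $\mathbb R^{2nK}$ are indexed by the pairs $(i,l)$, $l\in\mathcal D_i$ ("different-class pairs") and $(i,j)$, $j\in\mathcal S_i$ ("same-class pairs"); $\mathbf q$ has entries $q_{il},q_{ij}$. $\mathbf C\in\mathbb R^{p\times2nK}$ has column $\mathbf c_{il}$ for each different-class pair and $-\mathbf c_{ij}$ for each same-class pair. Fix $L\ge U\ge0$, $\eta>0$; let $\mathbf t\in\mathbb R^{2nK}$ have entry $L$ at different-class pairs and $-U$ at same-class pairs; $\ell_s(x)=([s-x]_+)^2$ with $[z]_+=\max\{z,0\}$ (entrywise for vectors); $\mathbf1$ is the all-ones vector. For $\lambda>0$, $$P_\lambda(\mathbf m)=\sum_{i\in[n]}\Big[\sum_{l\in\mathcal D_i}\ell_L(\mathbf m^\top\mathbf c_{il})+\sum_{j\in\mathcal S_i}\ell_{-U}(-\mathbf m^\top\mathbf c_{ij})\Big]+\lambda\Big(\mathbf m^\top\mathbf1+\frac\eta2\|\mathbf m\|_2^2\Big)\ (\mathbf m\in\mathbb R^p_{\ge0}),$$ $$D_\lambda(\boldsymbol\alpha)=-\frac14\|\boldsymbol\alpha\|_2^2+\mathbf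 t^\top\boldsymbol\alpha-\frac{\lambda\eta}2\Big\|\frac1{\lambda\eta}[\mathbf C\boldsymbol\alpha-\lambda\mathbf1]_+\Big\|_2^2\ (\boldsymbol\alpha\in\mathbb R^{2nK}_{\ge0}).$$ The feature indices $[p]$ are nodes of a rooted graph-mining tree: $x_{i,k}=g(\#(H_k\sqsubseteq G_i))$, where $H_k$ is the subgraph at node $k$, $G_i$ the $i$-th input graph, $\#(H\sqsubseteq G)$ the number of non-overlapping occurrences of $H$ in $G$, $g$ nonnegative and nondecreasing, and each node's subgraph is contained in its children's subgraphs. Write $k'\supseteq k$ if $k'$ is a descendant of $k$; in particular $0\le x_{i,k'}\le x_{i,k}$ for all $i$ whenever $k'\supseteq k$. *)

theory Defs
  imports Complex_Main
begin

text \<open>Index conventions: samples i range over {1..n}, features k over {1..p}.  Different-class neighbours Dc i, same-class neighbours Sc i.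
  Dual vectors are functions on tagged pairs: (True,i,l) for l in Dc i (different-class pair),
  (False,i,j) for j in Sc i (same-class pair).\<close>

definition cvec :: "(nat \<Rightarrow> nat \<Rightarrow> real) \<Rightarrow> nat \<Rightarrow> nat \<Rightarrow> nat \<Rightarrow> real" where
  "cvec x i j k = (x i k - x j k) * (x i k - x j k)"

definition sqhinge :: "real \<Rightarrow> real \<Rightarrow> real" where
  "sqhinge s z = (max (s - z) 0)\<^sup>2"

definition pairidx :: "nat \<Rightarrow> (nat \<Rightarrow> nat set) \<Rightarrow> (nat \<Rightarrow> nat set) \<Rightarrow> (bool \<times> nat \<times> nat) set" where
  "pairidx n Dc Sc = {(True, i, l) | i l. i \<in> {1..n} \<and> l \<in> Dc i}
                   \<union> {(False, i, j) | i j. i \<in> {1..n} \<and> j \<in> Sc i}"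

definition mdot :: "nat \<Rightarrow> (nat \<Rightarrow> nat \<Rightarrow> real) \<Rightarrow> (nat \<Rightarrow> real) \<Rightarrow> nat \<Rightarrow> nat \<Rightarrow> real" where
  "mdot p x m i j = (\<Sum>k\<in>{1..p}. m k * cvec x i j k)"

definition primal :: "nat \<Rightarrow> nat \<Rightarrow> (nat \<Rightarrow> nat \<Rightarrow> real) \<Rightarrow> (nat \<Rightarrow> nat set) \<Rightarrow> (nat \<Rightarrow> nat set)
    \<Rightarrow> real \<Rightarrow> real \<Rightarrow> real \<Rightarrow> real \<Rightarrow> (nat \<Rightarrow> real) \<Rightarrow> real" where
  "primal n p x Dc Sc L U \<eta> lam m =
     (\<Sum>i\<in>{1..n}. (\<Sum>l\<in>Dc i. sqhinge L (mdot p x m i l))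
                  + (\<Sum>j\<in>Sc i. sqhinge (- U) (- mdot p x m i j)))
     + lam * ((\<Sum>k\<in>{1..p}. m k) + \<eta> / 2 * (\<Sum>k\<in>{1..p}. (m k)\<^sup>2))"

definition Calpha :: "nat \<Rightarrow> (nat \<Rightarrow> nat \<Rightarrow> real) \<Rightarrow> (nat \<Rightarrow> nat set) \<Rightarrow> (nat \<Rightarrow> nat set)
    \<Rightarrow> (bool \<times> nat \<times> nat \<Rightarrow> real) \<Rightarrow> nat \<Rightarrow> real" where
  "Calpha n x Dc Sc \<alpha> k =
     (\<Sum>i\<in>{1..n}. (\<Sum>l\<in>Dc i. \<alpha> (True, i, l) * cvec x i l k)
                  - (\<Sum>j\<in>Sc i. \<alpha> (False, i, j) * cvec x i j k))"

definition tvec :: "real \<Rightarrow> real \<Rightarrow> bool \<times> nat \<times> nat \<Rightarrow> real" where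
  "tvec L U a = (if fst a then L else - U)"

definition dual :: "nat \<Rightarrow> nat \<Rightarrow> (nat \<Rightarrow> nat \<Rightarrow> real) \<Rightarrow> (nat \<Rightarrow> nat set) \<Rightarrow> (nat \<Rightarrow> nat set)
    \<Rightarrow> real \<Rightarrow> real \<Rightarrow> real \<Rightarrow> real \<Rightarrow> (bool \<times> nat \<times> nat \<Rightarrow> real) \<Rightarrow> real" where
  "dual n p x Dc Sc L U \<eta> lam \<alpha> =
     - 1/4 * (\<Sum>a\<in>pairidx n Dc Sc. (\<alpha> a)\<^sup>2)
     + (\<Sum>a\<in>pairidx n Dc Sc. tvec L U a * \<alpha> a)
     - lam * \<eta> / 2 * (\<Sum>k\<in>{1..p}. (1 / (lam * \<eta>) * max (Calpha n x Dc Sc \<alpha> k - lam) 0)\<^sup>2)"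

definition prune :: "nat \<Rightarrow> (nat \<Rightarrow> nat \<Rightarrow> real) \<Rightarrow> (nat \<Rightarrow> nat set) \<Rightarrow> (nat \<Rightarrow> nat set)
    \<Rightarrow> (bool \<times> nat \<times> nat \<Rightarrow> real) \<Rightarrow> real \<Rightarrow> nat \<Rightarrow> real" where
  "prune n x Dc Sc q r k =
     (\<Sum>i\<in>{1..n}. \<Sum>l\<in>Dc i. q (True, i, l) * (max (x i k) (x l k))\<^sup>2)
     + r * sqrt (\<Sum>i\<in>{1..n}. (\<Sum>l\<in>Dc i. (max (x i k) (x l k)) ^ 4)
                             + (\<Sum>j\<in>Sc i. (max (x i k) (x j k)) ^ 4))"

end

theory Submission
  imports Defs "HOL-Analysis.Convex"
begin

text \<open>The primal problem is an elastic-net regularised squared-hinge regression on the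
  nonnegative orthant and \<open>D\<^sub>\<lambda>\<close> is its Fenchel dual: the duality gap \<open>P(m) - D(\<alpha>)\<close> splits into
  Fenchel--Young gaps of the loss and of the regulariser, all nonnegative. The coordinatewise
  first-order conditions at the primal minimiser m* make \<open>2[t - C\<^sup>T m*]\<^sub>+\<close> a dual point with zero
  gap, so \<open>D(\<alpha>*) \<ge> P(m*)\<close> and the gap at \<open>(m*, \<alpha>*)\<close> vanishes; its regulariser part forces
  \<open>m*\<^sub>k = [(C\<alpha>*)\<^sub>k - \<lambda>]\<^sub>+ / (\<lambda>\<eta>)\<close>. For a descendant k' of k every pair feature satisfies
  \<open>0 \<le> c\<^sub>i\<^sub>j(k') \<le> max{x\<^sub>i(k), x\<^sub>j(k)}\<^sup>2\<close>, so Cauchy--Schwarz on the ball around q gives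
  \<open>(C\<alpha>*)\<^sub>k\<^sub>' \<le> Prune(k | q, r) \<le> \<lambda>\<close>, whence \<open>m*\<^sub>k\<^sub>' = 0\<close>.\<close>

lemma sq_max0_add_le:
  fixes u h :: real
  shows "(max (u + h) 0)\<^sup>2 \<le> (max u 0)\<^sup>2 + 2 * max u 0 * h + h\<^sup>2"
proof (cases "u \<ge> 0")
  case True
  have "0 \<le> (u + h)\<^sup>2" by simp
  then show ?thesis using True by (cases "u + h \<ge> 0") (auto simp: power2_eq_square algebra_simps)
next
  case False
  show ?thesis
  proof (cases "u + h \<ge> 0")
    case True
    have "u * (u + 2 * h) \<le> 0" using True False by (intro mult_nonpos_nonneg) auto
    then show ?thesis using True False by (simp add: power2_eq_square algebra_simps)
  qed (use False in simp)
qed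

text \<open>Fenchel--Young gap of \<open>u \<mapsto> [u]\<^sub>+\<^sup>2\<close>, whose conjugate is \<open>a\<^sup>2/4\<close> on \<open>a \<ge> 0\<close>.\<close>

definition sq_hinge_gap :: "real \<Rightarrow> real \<Rightarrow> real" where
  "sq_hinge_gap u a = (max u 0)\<^sup>2 - a * u + a\<^sup>2 / 4"

lemma sq_hinge_gap_nonneg:
  assumes "a \<ge> 0"
  shows "0 \<le> sq_hinge_gap u a"
proof -
  have "a * u \<le> a * max u 0" using assms by (simp add: mult_left_mono)
  moreover have "0 \<le> (max u 0 - a / 2)\<^sup>2" by simp
  ultimately show ?thesis unfolding sq_hinge_gap_def by (simp add: power2_eq_square algebra_simps)
qed

lemma sq_hinge_gap_self: "sq_hinge_gap u (2 * max u 0) = 0"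
  unfolding sq_hinge_gap_def by (cases "u \<ge> 0") (auto simp: power2_eq_square)

text \<open>Fenchel--Young gap of \<open>m \<mapsto> \<lambda>m + \<lambda>\<eta>m\<^sup>2/2\<close> on \<open>m \<ge> 0\<close>, whose conjugate is
  \<open>[C - \<lambda>]\<^sub>+\<^sup>2 / (2\<lambda>\<eta>)\<close>.\<close>

definition reg_gap :: "real \<Rightarrow> real \<Rightarrow> real \<Rightarrow> real \<Rightarrow> real" where
  "reg_gap lam \<eta> m C = lam * m + lam * \<eta> / 2 * m\<^sup>2 - m * C + (max (C - lam) 0)\<^sup>2 / (2 * lam * \<eta>)"

lemma reg_gap_below:
  assumes "C \<le> lam"
  shows "reg_gap lam \<eta> m C = m * (lam - C) + lam * \<eta> / 2 * m\<^sup>2"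
  using assms unfolding reg_gap_def by (simp add: algebra_simps)

lemma reg_gap_above:
  assumes "lam < C" "0 < lam" "0 < \<eta>"
  shows "reg_gap lam \<eta> m C = (lam * \<eta> * m - (C - lam))\<^sup>2 / (2 * lam * \<eta>)"
  using assms unfolding reg_gap_def by (simp add: field_simps power2_eq_square)

lemma reg_gap_nonneg:
  assumes "0 < lam" "0 < \<eta>" "0 \<le> m"
  shows "0 \<le> reg_gap lam \<eta> m C"
  using assms reg_gap_below[of C lam \<eta> m] reg_gap_above[of lam C \<eta> m]
  by (cases "C \<le> lam") auto

lemma reg_gap_eq_0_iff:
  assumes "0 < lam" "0 < \<eta>" "0 \<le> m"
  shows "reg_gap lam \<eta> m C = 0 \<longleftrightarrow> m = max (C - lam) 0 / (lam * \<eta>)"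
proof (cases "C \<le> lam")
  case True
  have "reg_gap lam \<eta> m C = 0 \<longleftrightarrow> m = 0"
    using assms True by (auto simp: reg_gap_below add_nonneg_eq_0_iff)
  then show ?thesis using True by simp
next
  case False
  then show ?thesis using assms by (auto simp: reg_gap_above field_simps)
qed

lemma quadratic_majorant_min_on_ray:
  fixes f :: "real \<Rightarrow> real"
  assumes "0 < M" "0 \<le> x"
    and majorant: "\<And>t. f t \<le> f 0 - t * G + t\<^sup>2 * M"
    and minimal: "\<And>t. - x \<le> t \<Longrightarrow> f 0 \<le> f t"
  shows "G \<le> 0" and "0 < x \<Longrightarrow> G = 0"
proof -
  show G_le: "G \<le> 0"
  proof (rule ccontr)
    assume "\<not> G \<le> 0"
    define t where "t = G / (2 * M)"
    have "0 \<le> t" unfolding t_def using \<open>\<not> G \<le> 0\<close> \<open>0 < M\<close> by simp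
    have "- t * G + t\<^sup>2 * M = - G\<^sup>2 / (4 * M)"
      unfolding t_def using \<open>0 < M\<close> by (simp add: field_simps power2_eq_square)
    also have "\<dots> < 0" using \<open>\<not> G \<le> 0\<close> \<open>0 < M\<close> by simp
    finally have "f t < f 0" using majorant[of t] by linarith
    moreover have "f 0 \<le> f t" using minimal[of t] \<open>0 \<le> t\<close> \<open>0 \<le> x\<close> by linarith
    ultimately show False by simp
  qed
  assume "0 < x"
  show "G = 0"
  proof (rule ccontr)
    assume "G \<noteq> 0"
    with G_le have "G < 0" by simp
    define h where "h = min x (- G / (2 * M))"
    have "0 < - G / (2 * M)" using \<open>G < 0\<close> \<open>0 < M\<close> divide_neg_pos[of G "2 * M"] by simp
    then have "0 < h" unfolding h_def using \<open>0 < x\<close> by simp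
    have "h \<le> (- G) / (2 * M)" unfolding h_def by simp
    then have "h * (2 * M) \<le> - G" using \<open>0 < M\<close> pos_le_divide_eq[of "2 * M" h "- G"] by simp
    then have "- (- h) * G + (- h)\<^sup>2 * M < 0"
      using \<open>0 < h\<close> \<open>G < 0\<close> mult_pos_neg[of h "G + h * M"] by (simp add: power2_eq_square algebra_simps)
    then have "f (- h) < f 0" using majorant[of "- h"] by linarith
    moreover have "f 0 \<le> f (- h)" using minimal[of "- h"] unfolding h_def by simp
    ultimately show False by simp
  qed
qed

lemma sum_fun_upd_add:
  fixes G :: "'f \<Rightarrow> 'b \<Rightarrow> 'c::ab_group_add"
  assumes "finite F" "k0 \<in> F"
  shows "(\<Sum>k\<in>F. G k ((m(k0 := v)) k)) = (\<Sum>k\<in>F. G k (m k)) + G k0 v - G k0 (m k0)"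
proof -
  have "(\<Sum>k\<in>F - {k0}. G k ((m(k0 := v)) k)) = (\<Sum>k\<in>F - {k0}. G k (m k))"
    by (rule sum.cong) auto
  then show ?thesis using assms by (simp add: sum.remove[of F k0])
qed

locale sq_hinge_problem =
  fixes A :: "'a set" and F :: "'f set"
    and s :: "'a \<Rightarrow> real" and c :: "'a \<Rightarrow> 'f \<Rightarrow> real"
    and lam \<eta> :: real
begin

definition residual :: "('f \<Rightarrow> real) \<Rightarrow> 'a \<Rightarrow> real" where
  "residual m a = s a - (\<Sum>k\<in>F. m k * c a k)"

definition primal_obj :: "('f \<Rightarrow> real) \<Rightarrow> real" where
  "primal_obj m = (\<Sum>a\<in>A. (max (residual m a) 0)\<^sup>2)
     + lam * ((\<Sum>k\<in>F. m k) + \<eta> / 2 * (\<Sum>k\<in>F. (m k)\<^sup>2))"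

definition feature_score :: "('a \<Rightarrow> real) \<Rightarrow> 'f \<Rightarrow> real" where
  "feature_score \<alpha> k = (\<Sum>a\<in>A. \<alpha> a * c a k)"

definition dual_obj :: "('a \<Rightarrow> real) \<Rightarrow> real" where
  "dual_obj \<alpha> = - 1/4 * (\<Sum>a\<in>A. (\<alpha> a)\<^sup>2) + (\<Sum>a\<in>A. s a * \<alpha> a)
     - (\<Sum>k\<in>F. (max (feature_score \<alpha> k - lam) 0)\<^sup>2 / (2 * lam * \<eta>))"

definition induced_dual :: "('f \<Rightarrow> real) \<Rightarrow> 'a \<Rightarrow> real" where
  "induced_dual m a = 2 * max (residual m a) 0"

end

locale sq_hinge_regression = sq_hinge_problem +
  assumes finite_F: "finite F"
    and lam_pos: "0 < lam" and eta_pos: "0 < \<eta>"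
begin

lemma sum_mult_feature_score:
  "(\<Sum>a\<in>A. \<alpha> a * (\<Sum>k\<in>F. m k * c a k)) = (\<Sum>k\<in>F. m k * feature_score \<alpha> k)"
  unfolding feature_score_def sum_distrib_left
  by (subst sum.swap) (simp add: mult_ac)

lemma duality_gap_eq:
  "primal_obj m - dual_obj \<alpha> =
     (\<Sum>a\<in>A. sq_hinge_gap (residual m a) (\<alpha> a)) + (\<Sum>k\<in>F. reg_gap lam \<eta> (m k) (feature_score \<alpha> k))"
proof -
  have loss: "(\<Sum>a\<in>A. sq_hinge_gap (residual m a) (\<alpha> a)) =
      (\<Sum>a\<in>A. (max (residual m a) 0)\<^sup>2) - (\<Sum>a\<in>A. s a * \<alpha> a)
      + (\<Sum>k\<in>F. m k * feature_score \<alpha> k) + 1/4 * (\<Sum>a\<in>A. (\<alpha> a)\<^sup>2)"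
    unfolding sq_hinge_gap_def residual_def sum_mult_feature_score[symmetric]
    by (simp add: sum.distrib sum_subtractf sum_distrib_left algebra_simps sum_divide_distrib)
  have reg: "(\<Sum>k\<in>F. reg_gap lam \<eta> (m k) (feature_score \<alpha> k)) =
      lam * (\<Sum>k\<in>F. m k) + lam * \<eta> / 2 * (\<Sum>k\<in>F. (m k)\<^sup>2) - (\<Sum>k\<in>F. m k * feature_score \<alpha> k)
      + (\<Sum>k\<in>F. (max (feature_score \<alpha> k - lam) 0)\<^sup>2 / (2 * lam * \<eta>))"
    unfolding reg_gap_def by (simp add: sum.distrib sum_subtractf sum_distrib_left)
  show ?thesis unfolding primal_obj_def dual_obj_def loss reg by (simp add: algebra_simps)
qed

lemma primal_obj_update_le:
  assumes "k0 \<in> F"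
  shows "primal_obj (m(k0 := m k0 + t)) \<le> primal_obj m
     - t * (feature_score (induced_dual m) k0 - lam - lam * \<eta> * m k0)
     + t\<^sup>2 * ((\<Sum>a\<in>A. (c a k0)\<^sup>2) + lam * \<eta> / 2)"
proof -
  have residual_upd: "residual (m(k0 := m k0 + t)) a = residual m a + - t * c a k0" for a
    using sum_fun_upd_add[OF finite_F assms, of "\<lambda>k y. y * c a k" m "m k0 + t"]
    unfolding residual_def by (simp add: algebra_simps)
  have loss_le: "(max (residual (m(k0 := m k0 + t)) a) 0)\<^sup>2 \<le>
      (max (residual m a) 0)\<^sup>2 - t * (induced_dual m a * c a k0) + t\<^sup>2 * (c a k0)\<^sup>2" for a
    using sq_max0_add_le[of "residual m a" "- t * c a k0"]
    unfolding residual_upd induced_dual_def by (simp add: power_mult_distrib algebra_simps)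
  have "(\<Sum>a\<in>A. (max (residual (m(k0 := m k0 + t)) a) 0)\<^sup>2) \<le>
      (\<Sum>a\<in>A. (max (residual m a) 0)\<^sup>2 - t * (induced_dual m a * c a k0) + t\<^sup>2 * (c a k0)\<^sup>2)"
    by (rule sum_mono) (rule loss_le)
  also have "\<dots> = (\<Sum>a\<in>A. (max (residual m a) 0)\<^sup>2) - t * feature_score (induced_dual m) k0
      + t\<^sup>2 * (\<Sum>a\<in>A. (c a k0)\<^sup>2)"
    unfolding feature_score_def by (simp add: sum.distrib sum_subtractf sum_distrib_left)
  finally have "(\<Sum>a\<in>A. (max (residual (m(k0 := m k0 + t)) a) 0)\<^sup>2) \<le>
      (\<Sum>a\<in>A. (max (residual m a) 0)\<^sup>2) - t * feature_score (induced_dual m) k0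
      + t\<^sup>2 * (\<Sum>a\<in>A. (c a k0)\<^sup>2)" .
  moreover have "(\<Sum>k\<in>F. (m(k0 := m k0 + t)) k) = (\<Sum>k\<in>F. m k) + t"
    using sum_fun_upd_add[OF finite_F assms, of "\<lambda>k y. y" m "m k0 + t"] by simp
  moreover have "(\<Sum>k\<in>F. ((m(k0 := m k0 + t)) k)\<^sup>2) = (\<Sum>k\<in>F. (m k)\<^sup>2) + 2 * t * m k0 + t\<^sup>2"
    using sum_fun_upd_add[OF finite_F assms, of "\<lambda>k y. y\<^sup>2" m "m k0 + t"]
    by (simp add: power2_eq_square algebra_simps)
  ultimately show ?thesis unfolding primal_obj_def by (simp add: algebra_simps)
qed

lemma primal_minimizer_eq:
  assumes m_nonneg: "\<forall>k\<in>F. 0 \<le> m k"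
    and m_min: "\<And>m'. \<forall>k\<in>F. 0 \<le> m' k \<Longrightarrow> primal_obj m \<le> primal_obj m'"
    and "k0 \<in> F"
  shows "m k0 = max (feature_score (induced_dual m) k0 - lam) 0 / (lam * \<eta>)"
proof -
  define G where "G = feature_score (induced_dual m) k0 - lam - lam * \<eta> * m k0"
  define M where "M = (\<Sum>a\<in>A. (c a k0)\<^sup>2) + lam * \<eta> / 2"
  define f where "f t = primal_obj (m(k0 := m k0 + t))" for t
  have "f 0 = primal_obj m" unfolding f_def by simp
  then have majorant: "f t \<le> f 0 - t * G + t\<^sup>2 * M" for t
    unfolding f_def G_def M_def using primal_obj_update_le[OF \<open>k0 \<in> F\<close>] by simp
  have "0 < M" unfolding M_def using lam_pos eta_pos by (simp add: sum_nonneg add_nonneg_pos)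
  moreover have "0 \<le> m k0" using m_nonneg \<open>k0 \<in> F\<close> by simp
  moreover have "f 0 \<le> f t" if "- m k0 \<le> t" for t
    using \<open>f 0 = primal_obj m\<close> m_min m_nonneg that unfolding f_def by simp
  ultimately have G_le: "G \<le> 0" and G_eq: "0 < m k0 \<Longrightarrow> G = 0"
    using quadratic_majorant_min_on_ray[of M "m k0" f G, OF _ _ majorant] by blast+
  show ?thesis
  proof (cases "0 < m k0")
    case True
    then have "feature_score (induced_dual m) k0 - lam = lam * \<eta> * m k0"
      using G_eq unfolding G_def by simp
    then show ?thesis using True lam_pos eta_pos by simp
  next
    case False
    then have "m k0 = 0" using \<open>0 \<le> m k0\<close> by simp
    then show ?thesis using G_le unfolding G_def by simp
  qed
qed

lemma primal_minimizer_zero_gap: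
  assumes m_nonneg: "\<forall>k\<in>F. 0 \<le> m k"
    and m_min: "\<And>m'. \<forall>k\<in>F. 0 \<le> m' k \<Longrightarrow> primal_obj m \<le> primal_obj m'"
  shows "primal_obj m = dual_obj (induced_dual m)"
proof -
  have "reg_gap lam \<eta> (m k) (feature_score (induced_dual m) k) = 0" if "k \<in> F" for k
    using reg_gap_eq_0_iff[OF lam_pos eta_pos] m_nonneg primal_minimizer_eq[OF m_nonneg m_min that] that
    by blast
  then show ?thesis
    using duality_gap_eq[of m "induced_dual m"] unfolding induced_dual_def sq_hinge_gap_self
    by simp
qed

theorem optimal_primal_eq:
  assumes m_nonneg: "\<forall>k\<in>F. 0 \<le> m k"
    and m_min: "\<And>m'. \<forall>k\<in>F. 0 \<le> m' k \<Longrightarrow> primal_obj m \<le> primal_obj m'"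
    and \<alpha>_nonneg: "\<forall>a\<in>A. 0 \<le> \<alpha> a"
    and \<alpha>_max: "\<And>\<beta>. \<forall>a\<in>A. 0 \<le> \<beta> a \<Longrightarrow> dual_obj \<beta> \<le> dual_obj \<alpha>"
    and "k \<in> F"
  shows "m k = max (feature_score \<alpha> k - lam) 0 / (lam * \<eta>)"
proof -
  have "dual_obj (induced_dual m) \<le> dual_obj \<alpha>"
    by (rule \<alpha>_max) (simp add: induced_dual_def)
  then have "primal_obj m - dual_obj \<alpha> \<le> 0"
    using primal_minimizer_zero_gap[OF m_nonneg m_min] by simp
  moreover have "0 \<le> (\<Sum>a\<in>A. sq_hinge_gap (residual m a) (\<alpha> a))"
    using \<alpha>_nonneg by (simp add: sum_nonneg sq_hinge_gap_nonneg)
  moreover have reg_nonneg: "\<forall>k\<in>F. 0 \<le> reg_gap lam \<eta> (m k) (feature_score \<alpha> k)"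
    using m_nonneg lam_pos eta_pos by (simp add: reg_gap_nonneg)
  moreover have "0 \<le> (\<Sum>k\<in>F. reg_gap lam \<eta> (m k) (feature_score \<alpha> k))"
    using reg_nonneg by (simp add: sum_nonneg)
  ultimately have "(\<Sum>k\<in>F. reg_gap lam \<eta> (m k) (feature_score \<alpha> k)) = 0"
    unfolding duality_gap_eq by linarith
  then have "reg_gap lam \<eta> (m k) (feature_score \<alpha> k) = 0"
    using sum_nonneg_eq_0_iff[OF finite_F, of "\<lambda>k. reg_gap lam \<eta> (m k) (feature_score \<alpha> k)"]
      reg_nonneg \<open>k \<in> F\<close>
    by simp
  then show ?thesis
    using reg_gap_eq_0_iff[OF lam_pos eta_pos, of "m k"] m_nonneg \<open>k \<in> F\<close> by simp
qed

end

lemma pairidx_eq_image_Sigma: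
  "pairidx n Dc Sc = (\<lambda>(i, l). (True, i, l)) ` Sigma {1..n} Dc \<union> (\<lambda>(i, j). (False, i, j)) ` Sigma {1..n} Sc"
  unfolding pairidx_def by auto

lemma sum_pairidx:
  fixes f :: "bool \<times> nat \<times> nat \<Rightarrow> real"
  assumes fin: "\<forall>i\<in>{1..n}. finite (Dc i) \<and> finite (Sc i)"
  shows "(\<Sum>a\<in>pairidx n Dc Sc. f a) =
    (\<Sum>i\<in>{1..n}. (\<Sum>l\<in>Dc i. f (True, i, l)) + (\<Sum>j\<in>Sc i. f (False, i, j)))"
proof -
  have fin_Sigma: "finite (Sigma {1..n} Dc)" "finite (Sigma {1..n} Sc)" using fin by auto
  have "(\<Sum>a\<in>pairidx n Dc Sc. f a) =
      (\<Sum>(i, l)\<in>Sigma {1..n} Dc. f (True, i, l)) + (\<Sum>(i, j)\<in>Sigma {1..n} Sc. f (False, i, j))"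
    unfolding pairidx_eq_image_Sigma using fin_Sigma
    by (subst sum.union_disjoint) (auto simp: sum.reindex inj_on_def case_prod_beta')
  also have "\<dots> = (\<Sum>i\<in>{1..n}. \<Sum>l\<in>Dc i. f (True, i, l)) + (\<Sum>i\<in>{1..n}. \<Sum>j\<in>Sc i. f (False, i, j))"
    using fin by (simp add: sum.Sigma)
  finally show ?thesis by (simp add: sum.distrib)
qed

text \<open>The columns of \<open>C\<close>: \<open>c\<^sub>i\<^sub>l\<close> for different-class and \<open>-c\<^sub>i\<^sub>j\<close> for same-class pairs.\<close>

fun pair_feature :: "(nat \<Rightarrow> nat \<Rightarrow> real) \<Rightarrow> bool \<times> nat \<times> nat \<Rightarrow> nat \<Rightarrow> real" where
  "pair_feature x (b, i, j) k = (if b then cvec x i j k else - cvec x i j k)"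

lemma primal_eq_primal_obj:
  assumes "\<forall>i\<in>{1..n}. finite (Dc i) \<and> finite (Sc i)"
  shows "primal n p x Dc Sc L U \<eta> lam m =
    sq_hinge_problem.primal_obj (pairidx n Dc Sc) {1..p} (tvec L U) (pair_feature x) lam \<eta> m"
  unfolding primal_def sq_hinge_problem.primal_obj_def sq_hinge_problem.residual_def
    sum_pairidx[OF assms]
  by (simp add: sqhinge_def tvec_def mdot_def sum_negf)

lemma Calpha_eq_feature_score:
  assumes "\<forall>i\<in>{1..n}. finite (Dc i) \<and> finite (Sc i)"
  shows "Calpha n x Dc Sc \<alpha> k =
    sq_hinge_problem.feature_score (pairidx n Dc Sc) (pair_feature x) \<alpha> k"
  unfolding Calpha_def sq_hinge_problem.feature_score_def sum_pairidx[OF assms]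
  by (simp add: sum_negf)

lemma dual_eq_dual_obj:
  assumes "\<forall>i\<in>{1..n}. finite (Dc i) \<and> finite (Sc i)" "0 < lam" "0 < \<eta>"
  shows "dual n p x Dc Sc L U \<eta> lam \<alpha> =
    sq_hinge_problem.dual_obj (pairidx n Dc Sc) {1..p} (tvec L U) (pair_feature x) lam \<eta> \<alpha>"
proof -
  have "lam * \<eta> / 2 * (\<Sum>k\<in>{1..p}. (1 / (lam * \<eta>) * max (Calpha n x Dc Sc \<alpha> k - lam) 0)\<^sup>2)
     = (\<Sum>k\<in>{1..p}. (max (Calpha n x Dc Sc \<alpha> k - lam) 0)\<^sup>2 / (2 * lam * \<eta>))"
    unfolding sum_distrib_left using assms(2,3)
    by (intro sum.cong refl) (simp add: field_simps power2_eq_square)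
  then show ?thesis
    unfolding dual_def sq_hinge_problem.dual_obj_def Calpha_eq_feature_score[OF assms(1)]
    by (simp add: mult.commute)
qed

lemma optimal_primal_eq_Calpha:
  assumes fin: "\<forall>i\<in>{1..n}. finite (Dc i) \<and> finite (Sc i)" and "0 < lam" "0 < \<eta>"
    and m_nonneg: "\<forall>k\<in>{1..p}. 0 \<le> m k"
    and m_min: "\<And>m'. \<forall>k\<in>{1..p}. 0 \<le> m' k \<Longrightarrow>
                  primal n p x Dc Sc L U \<eta> lam m \<le> primal n p x Dc Sc L U \<eta> lam m'"
    and \<alpha>_nonneg: "\<forall>a\<in>pairidx n Dc Sc. 0 \<le> \<alpha> a"
    and \<alpha>_max: "\<And>\<beta>. \<forall>a\<in>pairidx n Dc Sc. 0 \<le> \<beta> a \<Longrightarrow>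
                  dual n p x Dc Sc L U \<eta> lam \<beta> \<le> dual n p x Dc Sc L U \<eta> lam \<alpha>"
    and "k \<in> {1..p}"
  shows "m k = max (Calpha n x Dc Sc \<alpha> k - lam) 0 / (lam * \<eta>)"
proof -
  interpret sq_hinge_regression "pairidx n Dc Sc" "{1..p}" "tvec L U" "pair_feature x" lam \<eta>
    by unfold_locales (simp_all add: \<open>0 < lam\<close> \<open>0 < \<eta>\<close>)
  show ?thesis
    unfolding Calpha_eq_feature_score[OF fin]
  proof (rule optimal_primal_eq[OF m_nonneg _ \<alpha>_nonneg _ \<open>k \<in> {1..p}\<close>])
    show "primal_obj m \<le> primal_obj m'" if "\<forall>k\<in>{1..p}. 0 \<le> m' k" for m'
      using m_min[OF that] by (simp add: primal_eq_primal_obj[OF fin])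
    show "dual_obj \<beta> \<le> dual_obj \<alpha>" if "\<forall>a\<in>pairidx n Dc Sc. 0 \<le> \<beta> a" for \<beta>
      using \<alpha>_max[OF that] by (simp add: dual_eq_dual_obj[OF fin \<open>0 < lam\<close> \<open>0 < \<eta>\<close>])
  qed
qed

lemma cvec_le_max_sq:
  assumes "0 \<le> x i k'" "0 \<le> x j k'" "x i k' \<le> x i k" "x j k' \<le> x j k"
  shows "0 \<le> cvec x i j k'" and "cvec x i j k' \<le> (max (x i k) (x j k))\<^sup>2"
proof -
  have "\<bar>x i k' - x j k'\<bar> \<le> max (x i k) (x j k)" using assms by auto
  then have "\<bar>x i k' - x j k'\<bar>\<^sup>2 \<le> (max (x i k) (x j k))\<^sup>2" by (intro power_mono) auto
  then show "cvec x i j k' \<le> (max (x i k) (x j k))\<^sup>2" unfolding cvec_def by (simp add: power2_eq_square)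
qed (simp add: cvec_def)

lemma Calpha_le_prune:
  assumes fin: "\<forall>i\<in>{1..n}. finite (Dc i) \<and> finite (Sc i)"
    and nbrs: "\<forall>i\<in>{1..n}. Dc i \<subseteq> {1..n} \<and> Sc i \<subseteq> {1..n}"
    and x_nonneg: "\<And>i. i \<in> {1..n} \<Longrightarrow> 0 \<le> x i k'"
    and x_le: "\<And>i. i \<in> {1..n} \<Longrightarrow> x i k' \<le> x i k"
    and \<alpha>_nonneg: "\<forall>a\<in>pairidx n Dc Sc. 0 \<le> \<alpha> a"
    and ball: "(\<Sum>a\<in>pairidx n Dc Sc. (\<alpha> a - q a)\<^sup>2) \<le> r\<^sup>2" and "0 \<le> r"
  shows "Calpha n x Dc Sc \<alpha> k' \<le> prune n x Dc Sc q r k"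
proof -
  let ?A = "pairidx n Dc Sc"
  define w where "w = (\<lambda>(b :: bool, i, j). if b then (max (x i k) (x j k))\<^sup>2 else 0)"
  have w_sq: "(\<Sum>a\<in>?A. (w a)\<^sup>2) \<le> (\<Sum>i\<in>{1..n}. (\<Sum>l\<in>Dc i. (max (x i k) (x l k)) ^ 4)
                                         + (\<Sum>j\<in>Sc i. (max (x i k) (x j k)) ^ 4))"
    unfolding sum_pairidx[OF fin] w_def
    by (intro sum_mono add_mono) (simp_all flip: power_mult)
  have \<alpha>_Dc: "0 \<le> \<alpha> (True, i, l)" if "i \<in> {1..n}" "l \<in> Dc i" for i l
    using \<alpha>_nonneg that unfolding pairidx_def by auto
  have \<alpha>_Sc: "0 \<le> \<alpha> (False, i, j)" if "i \<in> {1..n}" "j \<in> Sc i" for i j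
    using \<alpha>_nonneg that unfolding pairidx_def by auto
  have cvec_bounds: "0 \<le> cvec x i j k'" "cvec x i j k' \<le> (max (x i k) (x j k))\<^sup>2"
    if "i \<in> {1..n}" "j \<in> {1..n}" for i j
    using cvec_le_max_sq[OF x_nonneg[OF that(1)] x_nonneg[OF that(2)] x_le[OF that(1)] x_le[OF that(2)]] .
  have "Calpha n x Dc Sc \<alpha> k' \<le> (\<Sum>i\<in>{1..n}. \<Sum>l\<in>Dc i. \<alpha> (True, i, l) * (max (x i k) (x l k))\<^sup>2)"
    unfolding Calpha_def
  proof (rule sum_mono)
    fix i assume i: "i \<in> {1..n}"
    have "0 \<le> (\<Sum>j\<in>Sc i. \<alpha> (False, i, j) * cvec x i j k')"
      by (intro sum_nonneg mult_nonneg_nonneg \<alpha>_Sc cvec_bounds(1)) (use i nbrs in blast)+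
    moreover have "(\<Sum>l\<in>Dc i. \<alpha> (True, i, l) * cvec x i l k')
        \<le> (\<Sum>l\<in>Dc i. \<alpha> (True, i, l) * (max (x i k) (x l k))\<^sup>2)"
      by (intro sum_mono mult_left_mono \<alpha>_Dc cvec_bounds(2)) (use i nbrs in blast)+
    ultimately show "(\<Sum>l\<in>Dc i. \<alpha> (True, i, l) * cvec x i l k') - (\<Sum>j\<in>Sc i. \<alpha> (False, i, j) * cvec x i j k')
        \<le> (\<Sum>l\<in>Dc i. \<alpha> (True, i, l) * (max (x i k) (x l k))\<^sup>2)"
      by linarith
  qed
  also have "\<dots> = (\<Sum>a\<in>?A. \<alpha> a * w a)"
    unfolding sum_pairidx[OF fin] w_def by simp
  also have "\<dots> = (\<Sum>a\<in>?A. q a * w a) + (\<Sum>a\<in>?A. (\<alpha> a - q a) * w a)"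
    by (simp add: sum.distrib[symmetric] algebra_simps)
  also have "(\<Sum>a\<in>?A. q a * w a) = (\<Sum>i\<in>{1..n}. \<Sum>l\<in>Dc i. q (True, i, l) * (max (x i k) (x l k))\<^sup>2)"
    unfolding sum_pairidx[OF fin] w_def by simp
  also have "(\<Sum>a\<in>?A. (\<alpha> a - q a) * w a) \<le> sqrt (\<Sum>a\<in>?A. (\<alpha> a - q a)\<^sup>2) * sqrt (\<Sum>a\<in>?A. (w a)\<^sup>2)"
    unfolding real_sqrt_mult[symmetric] by (rule real_le_rsqrt[OF Cauchy_Schwarz_ineq_sum])
  also have "\<dots> \<le> r * sqrt (\<Sum>i\<in>{1..n}. (\<Sum>l\<in>Dc i. (max (x i k) (x l k)) ^ 4)
                                         + (\<Sum>j\<in>Sc i. (max (x i k) (x j k)) ^ 4))"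
    using real_sqrt_le_mono[OF ball] real_sqrt_le_mono[OF w_sq] \<open>0 \<le> r\<close>
    by (intro mult_mono) (auto simp: sum_nonneg)
  finally show ?thesis unfolding prune_def by simp
qed

theorem theorem5:
  fixes n K p :: nat
    and x :: "nat \<Rightarrow> nat \<Rightarrow> real"
    and Dc Sc :: "nat \<Rightarrow> nat set"
    and L U \<eta> lam r :: real
    and g :: "nat \<Rightarrow> real"
    and cnt :: "nat \<Rightarrow> nat \<Rightarrow> nat"
    and desc :: "nat \<Rightarrow> nat \<Rightarrow> bool"
    and \<alpha>opt q :: "bool \<times> nat \<times> nat \<Rightarrow> real"
    and mopt :: "nat \<Rightarrow> real"
    and k :: nat
  assumes "n \<ge> 1" and "K \<ge> 1" and "p \<ge> 1"
    and D_sub: "\<And>i. i \<in> {1..n} \<Longrightarrow> Dc i \<subseteq> {1..n} \<and> card (Dc i) = K"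
    and S_sub: "\<And>i. i \<in> {1..n} \<Longrightarrow> Sc i \<subseteq> {1..n} \<and> card (Sc i) = K"
    and g_nonneg: "\<And>z. g z \<ge> 0" and g_mono: "mono g"
    and x_def: "\<And>i k. i \<in> {1..n} \<Longrightarrow> k \<in> {1..p} \<Longrightarrow> x i k = g (cnt i k)"
    and desc_in: "\<And>k k'. desc k k' \<Longrightarrow> k \<in> {1..p} \<and> k' \<in> {1..p}"
    and desc_cnt: "\<And>i k k'. i \<in> {1..n} \<Longrightarrow> desc k k' \<Longrightarrow> cnt i k' \<le> cnt i k"
    and "L \<ge> U" and "U \<ge> 0" and "\<eta> > 0" and "lam > 0"
    and alpha_feas: "\<forall>a\<in>pairidx n Dc Sc. \<alpha>opt a \<ge> 0"
    and alpha_opt: "\<And>\<beta>. \<forall>a\<in>pairidx n Dc Sc. \<beta> a \<ge> 0 \<Longrightarrow>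
                      dual n p x Dc Sc L U \<eta> lam \<beta> \<le> dual n p x Dc Sc L U \<eta> lam \<alpha>opt"
    and m_feas: "\<forall>k\<in>{1..p}. mopt k \<ge> 0"
    and m_opt: "\<And>m. \<forall>k\<in>{1..p}. m k \<ge> 0 \<Longrightarrow>
                      primal n p x Dc Sc L U \<eta> lam mopt \<le> primal n p x Dc Sc L U \<eta> lam m"
    and q_nonneg: "\<forall>a\<in>pairidx n Dc Sc. q a \<ge> 0"
    and "r \<ge> 0"
    and ball: "(\<Sum>a\<in>pairidx n Dc Sc. (\<alpha>opt a - q a)\<^sup>2) \<le> r\<^sup>2"
    and "k \<in> {1..p}"
    and prune_le: "prune n x Dc Sc q r k \<le> lam"
  shows "\<forall>k'. (k' = k \<or> desc k k') \<longrightarrow> mopt k' = 0"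
proof (intro allI impI)
  fix k' assume k': "k' = k \<or> desc k k'"
  have fin: "\<forall>i\<in>{1..n}. finite (Dc i) \<and> finite (Sc i)"
    using D_sub S_sub by (meson finite_atLeastAtMost finite_subset)
  have nbrs: "\<forall>i\<in>{1..n}. Dc i \<subseteq> {1..n} \<and> Sc i \<subseteq> {1..n}"
    using D_sub S_sub by blast
  have "k' \<in> {1..p}" using k' desc_in \<open>k \<in> {1..p}\<close> by blast
  have x_nonneg: "0 \<le> x i k'" if "i \<in> {1..n}" for i
    using x_def[OF that \<open>k' \<in> {1..p}\<close>] g_nonneg by simp
  have x_le: "x i k' \<le> x i k" if "i \<in> {1..n}" for i
  proof (cases "k' = k")
    case False
    then have "desc k k'" using k' by simp
    then have "g (cnt i k') \<le> g (cnt i k)" using desc_cnt[OF that] monoD[OF g_mono] by blast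
    then show ?thesis using x_def[OF that] desc_in[OF \<open>desc k k'\<close>] by simp
  qed simp
  have "mopt k' = max (Calpha n x Dc Sc \<alpha>opt k' - lam) 0 / (lam * \<eta>)"
    using optimal_primal_eq_Calpha[OF fin \<open>0 < lam\<close> \<open>0 < \<eta>\<close> m_feas m_opt alpha_feas alpha_opt
        \<open>k' \<in> {1..p}\<close>] .
  moreover have "Calpha n x Dc Sc \<alpha>opt k' \<le> lam"
    using Calpha_le_prune[where x = x and k = k and k' = k',
        OF fin nbrs x_nonneg x_le alpha_feas ball \<open>0 \<le> r\<close>] prune_le
    by linarith
  ultimately show "mopt k' = 0" by simp
qed

end
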